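(* Let $G$ be a Hamiltonian graph which is not a complete graph of odd order. Then $G$ has an IPD.
   Context: All graphs are finite and simple. A graph of order $n$ is Hamiltonian if it contains a cycle of order $n$ (through all vertices). The order of a path is its number of vertices. A path $P$ in $G$ is induced if the subgraph of $G$ induced on $V(P)$ is exactly $P$. A graph $G$ has an IPD (induced path decomposition) if $V(G)$ can be partitioned into sets $V_1,\dots,V_t$ such that each $G[V_i]$ is a path of order at least $2$. *)

theory Defs
  imports Main
begin

definition simple_graph :: "'a set \<Rightarrow> ('a \<Rightarrow> 'a \<Rightarrow> bool) \<Rightarrow> bool" where
  "simple_graph V E \<longleftrightarrow> finite V \<and> (\<forall>x y. E x y \<longrightarrow> x \<in> V \<and> y \<in> V)
     \<and> (\<forall>x y. E x y \<longrightarrow> E y x) \<and> (\<forall>x. \<not> E x x)"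

definition complete_graph :: "'a set \<Rightarrow> ('a \<Rightarrow> 'a \<Rightarrow> bool) \<Rightarrow> bool" where
  "complete_graph V E \<longleftrightarrow> (\<forall>x\<in>V. \<forall>y\<in>V. x \<noteq> y \<longrightarrow> E x y)"

definition hamiltonian :: "'a set \<Rightarrow> ('a \<Rightarrow> 'a \<Rightarrow> bool) \<Rightarrow> bool" where
  "hamiltonian V E \<longleftrightarrow> (\<exists>vs. distinct vs \<and> set vs = V \<and> length vs \<ge> 3
     \<and> (\<forall>i. Suc i < length vs \<longrightarrow> E (vs ! i) (vs ! Suc i))
     \<and> E (last vs) (hd vs))"

definition induced_path :: "('a \<Rightarrow> 'a \<Rightarrow> bool) \<Rightarrow> 'a set \<Rightarrow> bool" where
  "induced_path E S \<longleftrightarrow> (\<exists>ps. distinct ps \<and> set ps = S \<and>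
     (\<forall>i<length ps. \<forall>j<length ps. E (ps ! i) (ps ! j) \<longleftrightarrow> (i = Suc j \<or> j = Suc i)))"

definition has_IPD :: "'a set \<Rightarrow> ('a \<Rightarrow> 'a \<Rightarrow> bool) \<Rightarrow> bool" where
  "has_IPD V E \<longleftrightarrow> (\<exists>P. \<Union>P = V \<and> (\<forall>A\<in>P. \<forall>B\<in>P. A \<noteq> B \<longrightarrow> A \<inter> B = {})
     \<and> (\<forall>A\<in>P. card A \<ge> 2 \<and> induced_path E A))"

end

theory Submission imports Defs begin

text \<open>Label the Hamiltonian cycle \<open>v\<^sub>0, \<dots>, v\<^sub>n\<^sub>-\<^sub>1\<close> cyclically. If \<open>n\<close> is even, the
  consecutive pairs \<open>{v\<^sub>0,v\<^sub>1}, {v\<^sub>2,v\<^sub>3}, \<dots>\<close> form an IPD. If \<open>n\<close> is odd, the graph is not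
  complete, and since \<open>n\<close> is odd every missing edge \<open>v\<^sub>iv\<^sub>j\<close> has an even distance \<open>j - i\<close> or
  \<open>n - (j - i)\<close> along the cycle. Take the least even \<open>k\<close> such that some chord \<open>v\<^sub>rv\<^sub>r\<^sub>+\<^sub>k\<close> is
  missing and rotate so that \<open>r = 0\<close>; all even chords shorter than \<open>k\<close> are present. For
  \<open>k = 2\<close> use the induced path \<open>v\<^sub>0v\<^sub>1v\<^sub>2\<close>; for \<open>k \<ge> 4\<close> use \<open>v\<^sub>0v\<^sub>k\<^sub>-\<^sub>2v\<^sub>k\<close> together with the
  edge \<open>v\<^sub>k\<^sub>-\<^sub>3v\<^sub>k\<^sub>-\<^sub>1\<close>. In both cases the remaining vertices form arcs of even length, which are
  split into consecutive pairs.\<close>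

lemma has_IPD_Un:
  assumes "has_IPD A E" "has_IPD B E" "A \<inter> B = {}"
  shows "has_IPD (A \<union> B) E"
proof -
  obtain P where P: "\<Union>P = A" "\<forall>X\<in>P. \<forall>Y\<in>P. X \<noteq> Y \<longrightarrow> X \<inter> Y = {}"
      "\<forall>X\<in>P. card X \<ge> 2 \<and> induced_path E X"
    using assms(1) unfolding has_IPD_def by blast
  obtain Q where Q: "\<Union>Q = B" "\<forall>X\<in>Q. \<forall>Y\<in>Q. X \<noteq> Y \<longrightarrow> X \<inter> Y = {}"
      "\<forall>X\<in>Q. card X \<ge> 2 \<and> induced_path E X"
    using assms(2) unfolding has_IPD_def by blast
  have "\<forall>X\<in>P \<union> Q. \<forall>Y\<in>P \<union> Q. X \<noteq> Y \<longrightarrow> X \<inter> Y = {}"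
    using P(1,2) Q(1,2) assms(3) by blast
  then show ?thesis
    unfolding has_IPD_def using P(1,3) Q(1,3) by (intro exI[of _ "P \<union> Q"]) auto
qed

lemma has_IPD_image_Un:
  assumes "inj_on g C" "A \<subseteq> C" "B \<subseteq> C" "A \<inter> B = {}"
    and "has_IPD (g ` A) E" "has_IPD (g ` B) E"
  shows "has_IPD (g ` (A \<union> B)) E"
  using has_IPD_Un[OF assms(5,6)] inj_on_image_Int[OF assms(1-3)] assms(4)
  by (simp add: image_Un)

lemma has_IPD_induced_path: "2 \<le> card A \<Longrightarrow> induced_path E A \<Longrightarrow> has_IPD A E"
  unfolding has_IPD_def by (intro exI[of _ "{A}"]) auto

lemma has_IPD_edge:
  assumes "simple_graph V E" "E x y"
  shows "has_IPD {x, y} E"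
proof (rule has_IPD_induced_path)
  have "E y x" "\<not> E x x" "\<not> E y y" using assms unfolding simple_graph_def by auto
  then have "x \<noteq> y" using assms(2) by auto
  then show "2 \<le> card {x, y}" by simp
  show "induced_path E {x, y}"
    unfolding induced_path_def
    using \<open>x \<noteq> y\<close> \<open>E y x\<close> \<open>\<not> E x x\<close> \<open>\<not> E y y\<close> assms(2)
    by (intro exI[of _ "[x, y]"]) (auto simp: less_Suc_eq nth_Cons')
qed

lemma has_IPD_induced_P3:
  assumes "simple_graph V E" "E x y" "E y z" "\<not> E x z" "x \<noteq> z"
  shows "has_IPD {x, y, z} E"
proof (rule has_IPD_induced_path)
  have "E y x" "E z y" "\<not> E z x" "\<not> E x x" "\<not> E y y" "\<not> E z z"
    using assms unfolding simple_graph_def by auto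
  then have "x \<noteq> y" "y \<noteq> z" using assms(2,3) by auto
  then show "2 \<le> card {x, y, z}" using assms(5) by simp
  show "induced_path E {x, y, z}"
    unfolding induced_path_def
    using \<open>x \<noteq> y\<close> \<open>y \<noteq> z\<close> assms(2-5) \<open>E y x\<close> \<open>E z y\<close> \<open>\<not> E z x\<close> \<open>\<not> E x x\<close> \<open>\<not> E y y\<close> \<open>\<not> E z z\<close>
    by (intro exI[of _ "[x, y, z]"]) (auto simp: less_Suc_eq nth_Cons')
qed

lemma has_IPD_consecutive_pairs:
  assumes G: "simple_graph V E" and "even (b - a)" and inj: "inj_on g {a..<b}"
    and path: "\<forall>i. a \<le> i \<longrightarrow> Suc i < b \<longrightarrow> E (g i) (g (Suc i))"
  shows "has_IPD (g ` {a..<b}) E"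
proof (cases "a \<le> b")
  case True
  then obtain m where b: "b = a + 2 * m" using \<open>even (b - a)\<close> by (metis evenE le_add_diff_inverse)
  have "has_IPD (g ` {a..<a + 2 * m'}) E" if "m' \<le> m" for m'
    using that
  proof (induction m')
    case 0
    then show ?case unfolding has_IPD_def by (intro exI[of _ "{}"]) auto
  next
    case (Suc m')
    let ?j = "a + 2 * m'"
    have split: "{a..<a + 2 * Suc m'} = {a..<?j} \<union> {?j, Suc ?j}" by auto
    have "has_IPD (g ` {?j, Suc ?j}) E"
      using has_IPD_edge[OF G] path Suc.prems b by simp
    then show ?case
      unfolding split
      using Suc inj b by (intro has_IPD_image_Un[of g "{a..<b}"]) auto
  qed
  then show ?thesis using b by simp
next
  case False
  then show ?thesis unfolding has_IPD_def by (intro exI[of _ "{}"]) auto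
qed

lemma has_IPD_odd_path_missing_even_chord:
  assumes G: "simple_graph V E" and V: "V = g ` {0..<n}" and inj: "inj_on g {0..<n}"
    and path: "\<forall>i. Suc i < n \<longrightarrow> E (g i) (g (Suc i))"
    and n: "odd n" and k: "even k" "2 \<le> k" "k < n"
    and chords: "\<forall>i d. even d \<and> 2 \<le> d \<and> d < k \<and> i + d < n \<longrightarrow> E (g i) (g (i + d))"
    and missing: "\<not> E (g 0) (g k)"
  shows "has_IPD V E"
proof -
  have "g 0 \<noteq> g k" using inj k by (auto dest: inj_onD)
  have pairs: "has_IPD (g ` {a..<b}) E" if "even (b - a)" "b \<le> n" for a b
  proof (rule has_IPD_consecutive_pairs[OF G that(1)])
    show "inj_on g {a..<b}" using that(2) by (intro inj_on_subset[OF inj]) auto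
    show "\<forall>i. a \<le> i \<longrightarrow> Suc i < b \<longrightarrow> E (g i) (g (Suc i))" using path that(2) by auto
  qed
  show ?thesis
  proof (cases "k = 2")
    case True
    have P3: "has_IPD (g ` {0, 1, 2}) E"
      using has_IPD_induced_P3[OF G _ _ missing \<open>g 0 \<noteq> g k\<close>] path k True
      by (simp add: numeral_2_eq_2)
    have right: "has_IPD (g ` {3..<n}) E" using pairs[of n 3] n k by simp
    have "has_IPD (g ` ({0, 1, 2} \<union> {3..<n})) E"
      by (rule has_IPD_image_Un[OF inj _ _ _ P3 right]) (use k True in auto)
    moreover have "{0, 1, 2} \<union> {3..<n} = {0..<n}" using k True by auto
    ultimately show ?thesis unfolding V by metis
  next
    case False
    with k have "4 \<le> k" by presburger
    text \<open>The induced path \<open>v\<^sub>0v\<^sub>k\<^sub>-\<^sub>2v\<^sub>k\<close> leaves the arcs \<open>v\<^sub>1\<dots>v\<^sub>k\<^sub>-\<^sub>3\<close> (odd) and \<open>v\<^sub>k\<^sub>-\<^sub>1\<close>;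
      the chord \<open>v\<^sub>k\<^sub>-\<^sub>3v\<^sub>k\<^sub>-\<^sub>1\<close> joins them into even pieces.\<close>
    have "E (g 0) (g (0 + (k - 2)))" by (intro chords[rule_format]) (use k \<open>4 \<le> k\<close> in auto)
    moreover have "E (g (k - 2)) (g (k - 2 + 2))"
      by (intro chords[rule_format]) (use k \<open>4 \<le> k\<close> in auto)
    moreover have "E (g (k - 3)) (g (k - 3 + 2))"
      by (intro chords[rule_format]) (use k \<open>4 \<le> k\<close> in auto)
    moreover have "k - 2 + 2 = k" "k - 3 + 2 = k - 1" using \<open>4 \<le> k\<close> by auto
    ultimately have P3: "has_IPD (g ` {0, k - 2, k}) E" and chord: "has_IPD (g ` {k - 3, k - 1}) E"
      using has_IPD_induced_P3[OF G _ _ missing \<open>g 0 \<noteq> g k\<close>] has_IPD_edge[OF G] by auto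
    have left: "has_IPD (g ` {1..<k - 3}) E" using pairs[of "k - 3" 1] k \<open>4 \<le> k\<close> by simp
    have right: "has_IPD (g ` {k + 1..<n}) E" using pairs[of n "k + 1"] k n by simp
    have "has_IPD (g ` ({k - 3, k - 1} \<union> {k + 1..<n})) E" (is "has_IPD (g ` ?R) E")
      by (rule has_IPD_image_Un[OF inj _ _ _ chord right]) (use k \<open>4 \<le> k\<close> in auto)
    have "has_IPD (g ` ({1..<k - 3} \<union> ?R)) E" (is "has_IPD (g ` ?M) E")
      by (rule has_IPD_image_Un[OF inj _ _ _ left \<open>has_IPD (g ` ?R) E\<close>]) (use k in auto)
    have "has_IPD (g ` ({0, k - 2, k} \<union> ?M)) E"
      by (rule has_IPD_image_Un[OF inj _ _ _ P3 \<open>has_IPD (g ` ?M) E\<close>]) (use k \<open>4 \<le> k\<close> in auto)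
    moreover have "{0, k - 2, k} \<union> ({1..<k - 3} \<union> ({k - 3, k - 1} \<union> {k + 1..<n})) = {0..<n}"
      using k \<open>4 \<le> k\<close> by auto
    ultimately show ?thesis unfolding V by metis
  qed
qed

lemma hamiltonian_cyclic_labelling:
  assumes "hamiltonian V E"
  obtains c :: "nat \<Rightarrow> 'a" and n where "card V = n" "\<forall>i. c (i + n) = c i"
    "\<forall>i. E (c i) (c (Suc i))"
    "\<And>r. inj_on (\<lambda>i. c (r + i)) {0..<n}" "\<And>r. (\<lambda>i. c (r + i)) ` {0..<n} = V"
proof -
  obtain vs where vs: "distinct vs" "set vs = V" "length vs \<ge> 3"
    "\<forall>i. Suc i < length vs \<longrightarrow> E (vs ! i) (vs ! Suc i)" "E (last vs) (hd vs)"
    using assms unfolding hamiltonian_def by blast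
  define n where "n = length vs"
  define c where "c i = vs ! (i mod n)" for i
  have rotate: "map (\<lambda>i. c (r + i)) [0..<n] = rotate r vs" for r
    unfolding c_def n_def by (rule nth_equalityI) (simp_all add: nth_rotate)
  show thesis
  proof (rule that)
    show "card V = n" using distinct_card[OF vs(1)] vs(2) by (simp add: n_def)
    show "\<forall>i. c (i + n) = c i" by (simp add: c_def)
    show "inj_on (\<lambda>i. c (r + i)) {0..<n}" for r
      using rotate[of r] vs(1) distinct_map[of "\<lambda>i. c (r + i)" "[0..<n]"] by simp
    show "(\<lambda>i. c (r + i)) ` {0..<n} = V" for r
      using arg_cong[OF rotate[of r], of set] vs(2) by simp
    have "E (c i) (c (Suc i))" for i
    proof (cases "Suc (i mod n) = n")
      case True
      moreover have "vs \<noteq> []" using vs(3) by auto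
      moreover have "i mod n = n - 1" using True by simp
      ultimately have "c i = last vs" "c (Suc i) = hd vs"
        unfolding c_def n_def by (simp_all add: last_conv_nth hd_conv_nth mod_Suc)
      then show ?thesis using vs(5) by simp
    next
      case False
      moreover have "i mod n < n" using vs(3) unfolding n_def by (intro mod_less_divisor) linarith
      ultimately have "Suc (i mod n) < n" "Suc i mod n = Suc (i mod n)" by (simp_all add: mod_Suc)
      then show ?thesis using vs(4) unfolding c_def n_def by simp
    qed
    then show "\<forall>i. E (c i) (c (Suc i))" by blast
  qed
qed

text \<open>Both arcs between the ends of a missing chord have lengths summing to the odd \<open>n\<close>,
  so one of them is even.\<close>
lemma odd_cycle_missing_even_chord:
  fixes c :: "nat \<Rightarrow> 'a"
  assumes G: "simple_graph V E" and n: "odd n" and periodic: "\<forall>i. c (i + n) = c i"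
    and V: "c ` {0..<n} = V" and "\<not> complete_graph V E"
  shows "\<exists>r d. even d \<and> 2 \<le> d \<and> d < n \<and> \<not> E (c r) (c (r + d))"
proof -
  have sym: "E x y \<longleftrightarrow> E y x" for x y using G unfolding simple_graph_def by blast
  obtain p q where pq: "p < q" "q < n" "\<not> E (c p) (c q)"
  proof -
    obtain x y where "x \<in> V" "y \<in> V" "x \<noteq> y" "\<not> E x y"
      using assms(5) unfolding complete_graph_def by blast
    moreover obtain i j where "i < n" "j < n" "x = c i" "y = c j"
      using \<open>x \<in> V\<close> \<open>y \<in> V\<close> V by (metis atLeastLessThan_iff imageE)
    ultimately have "i \<noteq> j" "\<not> E (c i) (c j)" "\<not> E (c j) (c i)" using sym by auto
    then show thesis using that \<open>i < n\<close> \<open>j < n\<close> by (metis linorder_neqE_nat)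
  qed
  show ?thesis
  proof (cases "even (q - p)")
    case True
    moreover have "\<not> E (c p) (c (p + (q - p)))" "q - p < n" using pq by auto
    moreover have "2 \<le> q - p" using pq True by presburger
    ultimately show ?thesis by blast
  next
    case False
    have "q + (n - (q - p)) = p + n" using pq by simp
    then have "c (q + (n - (q - p))) = c p" using periodic by metis
    then have "\<not> E (c q) (c (q + (n - (q - p))))" using pq(3) sym by simp
    moreover have "even (n - (q - p))" using False n pq by simp
    moreover have "2 \<le> n - (q - p)" using \<open>even (n - (q - p))\<close> False pq by presburger
    moreover have "n - (q - p) < n" using pq by simp
    ultimately show ?thesis by blast
  qed
qed

lemma odd_cycle_least_missing_even_chord:
  fixes c :: "nat \<Rightarrow> 'a"
  assumes "simple_graph V E" "odd n" "\<forall>i. c (i + n) = c i" "c ` {0..<n} = V"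
    and "\<not> complete_graph V E"
  obtains k r where "even k" "2 \<le> k" "k < n" "\<not> E (c r) (c (r + k))"
    and "\<And>d s. even d \<Longrightarrow> 2 \<le> d \<Longrightarrow> d < k \<Longrightarrow> E (c s) (c (s + d))"
proof -
  let ?missing = "\<lambda>d. even d \<and> 2 \<le> d \<and> d < n \<and> (\<exists>r. \<not> E (c r) (c (r + d)))"
  have "\<exists>d. ?missing d" using odd_cycle_missing_even_chord[OF assms] by blast
  define k where "k = (LEAST d. ?missing d)"
  have k: "?missing k" unfolding k_def using \<open>\<exists>d. ?missing d\<close> by (rule LeastI_ex)
  have "\<not> ?missing d" if "d < k" for d
    using that unfolding k_def by (rule not_less_Least)
  with k show thesis using that by (meson order.strict_trans)
qed

theorem mainTheorem3:
  fixes V :: "'a set" and E :: "'a \<Rightarrow> 'a \<Rightarrow> bool"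
  assumes "simple_graph V E"
    and "hamiltonian V E"
    and "\<not> (complete_graph V E \<and> odd (card V))"
  shows "has_IPD V E"
proof -
  obtain c n where "card V = n" and periodic: "\<forall>i. c (i + n) = c i"
    and cycle: "\<forall>i. E (c i) (c (Suc i))"
    and inj: "\<And>r. inj_on (\<lambda>i. c (r + i)) {0..<n}" and V: "\<And>r. (\<lambda>i. c (r + i)) ` {0..<n} = V"
    by (rule hamiltonian_cyclic_labelling[OF assms(2)]) (rule that)
  show ?thesis
  proof (cases "even n")
    case True
    then show ?thesis
      using has_IPD_consecutive_pairs[OF assms(1), of n 0 c] inj[of 0] V[of 0] cycle by simp
  next
    case False
    with assms(3) \<open>card V = n\<close> have "\<not> complete_graph V E" by simp
    then obtain k r where k: "even k" "2 \<le> k" "k < n" and r: "\<not> E (c r) (c (r + k))"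
      and least: "\<And>d s. even d \<Longrightarrow> 2 \<le> d \<Longrightarrow> d < k \<Longrightarrow> E (c s) (c (s + d))"
      using odd_cycle_least_missing_even_chord[OF assms(1) False periodic] V[of 0] by auto
    show ?thesis
    proof (rule has_IPD_odd_path_missing_even_chord[OF assms(1) V[of r, symmetric] inj[of r] _ False k])
      show "\<forall>i d. even d \<and> 2 \<le> d \<and> d < k \<and> i + d < n \<longrightarrow> E (c (r + i)) (c (r + (i + d)))"
        by (auto simp flip: add.assoc intro: least)
    qed (use r cycle in auto)
  qed
qed

end
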